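(* Let $(\breve N,\breve g,\breve P)$ be a Golden semi-Riemannian manifold. Then $\breve N$ admits no $1$-lightlike transversal lightlike submanifold. That is, there is no transversal lightlike submanifold $\acute N$ with $\operatorname{rank}(\mathrm{Rad}\,T\acute N)=1$.
   Context: A Golden semi-Riemannian manifold is $(\breve N,\breve g,\breve P)$ with $\breve P^2=\breve P+I$ and $\breve g(\breve PX,Y)=\breve g(X,\breve PY)$. Lightlike submanifold $(\acute N,g,S(T\acute N),S(T\acute N^\perp))$: the induced metric is degenerate with radical $\mathrm{Rad}\,T\acute N=T\acute N\cap T\acute N^\perp$ of constant rank $r\ge1$. The screen $S(T\acute N)$ is non-degenerate with $T\acute N=\mathrm{Rad}\,T\acute N\perp S(T\acute N)$. The screen transversal bundle $S(T\acute N^\perp)$ is a complement of $\mathrm{Rad}\,T\acute N$ in $T\acute N^\perp$. The lightlike transversal bundle $ltr(T\acute N)$ is locally spanned by $N_i$ with $\breve g(N_i,\xi_j)=\delta_{ij}$ and $\breve g(N_i,N_j)=0$, and is orthogonal to $S(T\acute N)$ and $S(T\acute N^\perp)$. The submanifold is $r$-lightlike if $\operatorname{rank}\mathrm{Rad}\,T\acute N=r$. A transversal lightlike submanifold is one with $\breve P(\mathrm{Rad}\,T\acute N)=ltr(T\acute N)$ and $\breve P(S(T\acute N))\subseteq S(T\acute N^\perp)$. *)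

theory Defs
  imports "HOL-Analysis.Analysis"
begin

text \<open>Fibrewise (tangent-space level) model. The ambient manifold has point type 'p;
  at every point the tangent space is modelled by the finite-dimensional real vector space 'v.\<close>

definition nondegenerate_on :: "('v::real_vector \<Rightarrow> 'v \<Rightarrow> real) \<Rightarrow> 'v set \<Rightarrow> bool" where
  "nondegenerate_on g W \<longleftrightarrow> (\<forall>w\<in>W. (\<forall>u\<in>W. g w u = 0) \<longrightarrow> w = 0)"

definition semi_riemannian_form :: "('v::real_vector \<Rightarrow> 'v \<Rightarrow> real) \<Rightarrow> bool" where
  "semi_riemannian_form g \<longleftrightarrow> bilinear g \<and> (\<forall>u v. g u v = g v u) \<and> nondegenerate_on g UNIV"

definition golden_structure :: "('v::real_vector \<Rightarrow> 'v \<Rightarrow> real) \<Rightarrow> ('v \<Rightarrow> 'v) \<Rightarrow> bool" where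
  "golden_structure g P \<longleftrightarrow> linear P \<and> (\<forall>v. P (P v) = P v + v) \<and> (\<forall>u v. g (P u) v = g u (P v))"

definition gorth :: "('v::real_vector \<Rightarrow> 'v \<Rightarrow> real) \<Rightarrow> 'v set \<Rightarrow> 'v set" where
  "gorth g A = {v. \<forall>a\<in>A. g a v = 0}"

definition radical :: "('v::real_vector \<Rightarrow> 'v \<Rightarrow> real) \<Rightarrow> 'v set \<Rightarrow> 'v set" where
  "radical g T = T \<inter> gorth g T"

definition set_sum :: "'v::real_vector set \<Rightarrow> 'v set \<Rightarrow> 'v set" where
  "set_sum A B = {a + b | a b. a \<in> A \<and> b \<in> B}"

text \<open>Data of an r-lightlike submanifold at one point: tangent space T, screen S,
  screen transversal bundle Sp, lightlike transversal bundle ltr, with a basis xi of Rad T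
  and the dual null frame N spanning ltr.\<close>

definition lightlike_frame ::
  "('v::euclidean_space \<Rightarrow> 'v \<Rightarrow> real) \<Rightarrow> 'v set \<Rightarrow> 'v set \<Rightarrow> 'v set \<Rightarrow> 'v set \<Rightarrow> nat
    \<Rightarrow> (nat \<Rightarrow> 'v) \<Rightarrow> (nat \<Rightarrow> 'v) \<Rightarrow> bool" where
  "lightlike_frame g T S Sp ltr r xi N \<longleftrightarrow>
     subspace T \<and> subspace S \<and> subspace Sp \<and> subspace ltr \<and> r \<ge> 1 \<and>
     inj_on xi {..<r} \<and> independent (xi ` {..<r}) \<and>
     radical g T = span (xi ` {..<r}) \<and> dim (radical g T) = r \<and>
     S \<subseteq> T \<and> nondegenerate_on g S \<and> radical g T \<inter> S = {0} \<and>
     set_sum (radical g T) S = T \<and>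
     (\<forall>a\<in>radical g T. \<forall>s\<in>S. g a s = 0) \<and>
     Sp \<subseteq> gorth g T \<and> radical g T \<inter> Sp = {0} \<and> set_sum (radical g T) Sp = gorth g T \<and>
     ltr = span (N ` {..<r}) \<and>
     (\<forall>i<r. \<forall>j<r. g (N i) (xi j) = (if i = j then 1 else 0) \<and> g (N i) (N j) = 0) \<and>
     (\<forall>l\<in>ltr. \<forall>s\<in>S. g l s = 0) \<and> (\<forall>l\<in>ltr. \<forall>s\<in>Sp. g l s = 0)"

definition transversal_cond ::
  "('v::real_vector \<Rightarrow> 'v \<Rightarrow> real) \<Rightarrow> ('v \<Rightarrow> 'v) \<Rightarrow> 'v set \<Rightarrow> 'v set \<Rightarrow> 'v set \<Rightarrow> 'v set \<Rightarrow> bool" where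
  "transversal_cond g P T S Sp ltr \<longleftrightarrow> P ` radical g T = ltr \<and> P ` S \<subseteq> Sp"

end

theory Submission
  imports Defs
begin

text \<open>At a point of a 1-lightlike transversal submanifold the radical is spanned by a null
  vector \<open>\<xi>\<close> and \<open>ltr\<close> by a null vector \<open>N\<close> with \<open>g N \<xi> = 1\<close>. Transversality gives
  \<open>P \<xi> = c N\<close>, so \<open>P \<xi>\<close> is null; but \<open>P\<^sup>2 = P + I\<close> and the symmetry of \<open>P\<close> give
  \<open>g (P \<xi>) (P \<xi>) = g \<xi> (P \<xi>) + g \<xi> \<xi> = c\<close>. Hence \<open>c = 0\<close>, i.e. \<open>P \<xi> = 0\<close>, which is impossible
  since \<open>P\<close> is invertible (\<open>P (P - I) = I\<close>).\<close>

lemma golden_structure_eq_0_iff: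
  assumes "golden_structure g P"
  shows "P v = 0 \<longleftrightarrow> v = 0"
proof
  have lin: "linear P" and PP: "P (P v) = P v + v"
    using assms unfolding golden_structure_def by auto
  show "P v = 0 \<Longrightarrow> v = 0" using PP linear_0[OF lin] by simp
  show "v = 0 \<Longrightarrow> P v = 0" using linear_0[OF lin] by simp
qed

lemma golden_structure_image_self:
  assumes "golden_structure g P" and "bilinear g"
  shows "g (P v) (P v) = g v (P v) + g v v"
proof -
  have "g (P v) (P v) = g v (P (P v))"
    using assms(1) unfolding golden_structure_def by blast
  also have "\<dots> = g v (P v + v)"
    using assms(1) unfolding golden_structure_def by simp
  finally show ?thesis
    using assms(2) by (simp add: bilinear_radd)
qed

lemma radical_self_orthogonal:
  assumes "v \<in> radical g T"
  shows "g v v = 0"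
  using assms unfolding radical_def gorth_def by blast

lemma lightlike_frame_rank_one:
  assumes "lightlike_frame g T S Sp ltr 1 xi N"
  shows "xi 0 \<in> radical g T" and "xi 0 \<noteq> 0" and "ltr = span {N 0}"
    and "g (N 0) (xi 0) = 1" and "g (N 0) (N 0) = 0"
proof -
  have lessThan_1: "{..<(1::nat)} = {0}" by auto
  have rad: "radical g T = span {xi 0}" and ind: "independent {xi 0}"
    using assms unfolding lightlike_frame_def lessThan_1 by auto
  show "xi 0 \<in> radical g T" using rad by (simp add: span_base)
  show "xi 0 \<noteq> 0" using ind dependent_zero[of "{xi 0}"] by auto
  show "ltr = span {N 0}" and "g (N 0) (xi 0) = 1" and "g (N 0) (N 0) = 0"
    using assms unfolding lightlike_frame_def lessThan_1 by auto
qed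

lemma golden_no_rank_one_transversal_frame:
  assumes bil: "bilinear g" and sym: "\<And>u v. g u v = g v u"
    and golden: "golden_structure g P"
    and frame: "lightlike_frame g T S Sp ltr 1 xi N"
  shows "\<not> transversal_cond g P T S Sp ltr"
proof
  assume "transversal_cond g P T S Sp ltr"
  then have "P (xi 0) \<in> ltr"
    using lightlike_frame_rank_one(1)[OF frame] unfolding transversal_cond_def by blast
  then obtain c where c: "P (xi 0) = c *\<^sub>R N 0"
    using lightlike_frame_rank_one(3)[OF frame] by (auto simp: span_singleton)
  have "c = g (xi 0) (P (xi 0)) + g (xi 0) (xi 0)"
    using c bil sym lightlike_frame_rank_one(4)[OF frame]
      radical_self_orthogonal[OF lightlike_frame_rank_one(1)[OF frame]]
    by (simp add: bilinear_rmul)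
  also have "\<dots> = g (P (xi 0)) (P (xi 0))"
    using golden_structure_image_self[OF golden bil] by simp
  also have "\<dots> = 0"
    using c bil lightlike_frame_rank_one(5)[OF frame] by (simp add: bilinear_rmul bilinear_lmul)
  finally have "P (xi 0) = 0" using c by simp
  then show False
    using golden_structure_eq_0_iff[OF golden] lightlike_frame_rank_one(2)[OF frame] by blast
qed

theorem mainTheorem9:
  fixes g :: "'p \<Rightarrow> 'v::euclidean_space \<Rightarrow> 'v \<Rightarrow> real" and P :: "'p \<Rightarrow> 'v \<Rightarrow> 'v"
  assumes "\<forall>x. semi_riemannian_form (g x) \<and> golden_structure (g x) (P x)"
  shows "\<not> (\<exists>(M :: 'p set) (T :: 'p \<Rightarrow> 'v set) (S :: 'p \<Rightarrow> 'v set) (Sp :: 'p \<Rightarrow> 'v set)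
             (ltr :: 'p \<Rightarrow> 'v set) (xi :: 'p \<Rightarrow> nat \<Rightarrow> 'v) (N :: 'p \<Rightarrow> nat \<Rightarrow> 'v).
            M \<noteq> {} \<and>
            (\<forall>x\<in>M. lightlike_frame (g x) (T x) (S x) (Sp x) (ltr x) 1 (xi x) (N x) \<and>
                    transversal_cond (g x) (P x) (T x) (S x) (Sp x) (ltr x)))"
proof
  assume "\<exists>M T S Sp ltr xi N. M \<noteq> {} \<and>
            (\<forall>x\<in>M. lightlike_frame (g x) (T x) (S x) (Sp x) (ltr x) 1 (xi x) (N x) \<and>
                    transversal_cond (g x) (P x) (T x) (S x) (Sp x) (ltr x))"
  then obtain x T S Sp ltr xi N
    where frame: "lightlike_frame (g x) T S Sp ltr 1 xi N"
      and transversal: "transversal_cond (g x) (P x) T S Sp ltr"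
    by blast
  have "bilinear (g x)" and "\<And>u v. g x u v = g x v u" and "golden_structure (g x) (P x)"
    using assms unfolding semi_riemannian_form_def by auto
  then show False
    using golden_no_rank_one_transversal_frame frame transversal by blast
qed

end
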